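(* Let $\mathcal{Y}=\{y_1,\dots,y_{n+1}\}\subset\mathbb{R}^n$ be affinely independent and $y_0\in\mathbb{R}^n$, with notation as in the context. Then the $(|\mathcal{I}_-|-1)\times(|\mathcal{I}_-|-1)$ matrix $Y_-P_-$ is invertible (when $|\mathcal{I}_-|=1$ this is the empty matrix, regarded as invertible).
   Context: The barycentric coordinates of $y_0$ w.r.t. $\mathcal{Y}$ are the unique reals $\ell_1,\dots,\ell_{n+1}$ with $\sum_{i=1}^{n+1}\ell_i=1$, $\sum_{i=1}^{n+1}\ell_iy_i=y_0$; set $\ell_0=-1$. The points are ordered so that $\ell_1\ge\ell_2\ge\cdots\ge\ell_{n+1}$. Let $\mathcal{I}_+=\{i\in\{0,\dots,n+1\}:\ell_i>0\}=\{1,\dots,|\mathcal{I}_+|\}$ and $\mathcal{I}_-=\{i\in\{0,\dots,n+1\}:\ell_i<0\}=\{0\}\cup\{n+3-|\mathcal{I}_-|,\dots,n+1\}$. Let $G=\sum_{i=0}^{n+1}\ell_iy_iy_i^T$. Let $Y\in\mathbb{R}^{(n+1)\times n}$ have $i$th row $(y_i-y_0)^T$; then $G=Y^T\operatorname{diag}(\ell_1,\dots,\ell_{n+1})Y$. Let $Y_-$ be the submatrix of $Y$ formed by its last $|\mathcal{I}_-|-1$ rows (those indexed by $\mathcal{I}_-\setminus\{0\}$). Let $P_-\in\mathbb{R}^{n\times(|\mathcal{I}_-|-1)}$ be a matrix whose columns are orthonormal eigenvectors of $G$ for its negative eigenvalues (there are $|\mathcal{I}_-|-1$ of them, counted with multiplicity).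 *)

theory Defs
  imports "Jordan_Normal_Form.Matrix"
begin

definition aff_indep :: "nat \<Rightarrow> (nat \<Rightarrow> real vec) \<Rightarrow> bool" where
  "aff_indep n y \<longleftrightarrow>
     (\<forall>c :: nat \<Rightarrow> real.
        (\<Sum>i=1..n+1. c i) = 0 \<and> finsum_vec TYPE(real) n (\<lambda>i. c i \<cdot>\<^sub>v y i) {1..n+1} = 0\<^sub>v n
        \<longrightarrow> (\<forall>i\<in>{1..n+1}. c i = 0))"

definition Ymat :: "nat \<Rightarrow> (nat \<Rightarrow> real vec) \<Rightarrow> real mat" where
  "Ymat n y = mat (n+1) n (\<lambda>(i,j). (y (i+1) - y 0) $ j)"

definition Gmat :: "nat \<Rightarrow> (nat \<Rightarrow> real vec) \<Rightarrow> (nat \<Rightarrow> real) \<Rightarrow> real mat" where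
  "Gmat n y l = transpose_mat (Ymat n y)
      * mat (n+1) (n+1) (\<lambda>(i,j). if i = j then l (i+1) else 0) * Ymat n y"

text \<open>Number of negative barycentric coordinates among l_1..l_(n+1), i.e. |I_-| - 1.\<close>
definition nneg :: "nat \<Rightarrow> (nat \<Rightarrow> real) \<Rightarrow> nat" where
  "nneg n l = card {i\<in>{1..n+1}. l i < 0}"

definition Yminus :: "nat \<Rightarrow> (nat \<Rightarrow> real vec) \<Rightarrow> (nat \<Rightarrow> real) \<Rightarrow> real mat" where
  "Yminus n y l = mat (nneg n l) n (\<lambda>(i,j). Ymat n y $$ (n + 1 - nneg n l + i, j))"

end

theory Submission
  imports Defs "Jordan_Normal_Form.Determinant"
begin

text \<open>If \<open>Y\<^sub>- P\<^sub>- c = 0\<close>, put \<open>v = P\<^sub>- c\<close>. Then \<open>v\<^sup>T G v = \<Sum>\<^sub>i \<ell>\<^sub>i ((y\<^sub>i - y\<^sub>0)\<^sup>T v)\<^sup>2\<close>,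
  and every term with \<open>\<ell>\<^sub>i < 0\<close> vanishes because the corresponding rows are exactly those of
  \<open>Y\<^sub>-\<close>; so \<open>v\<^sup>T G v \<ge> 0\<close>. On the other hand the columns of \<open>P\<^sub>-\<close> are orthonormal eigenvectors
  for negative eigenvalues \<open>\<mu>\<^sub>j\<close>, whence \<open>v\<^sup>T G v = \<Sum>\<^sub>j \<mu>\<^sub>j c\<^sub>j\<^sup>2\<close>, which is negative unless
  \<open>c = 0\<close>. So \<open>Y\<^sub>- P\<^sub>-\<close> is a square matrix with trivial kernel.\<close>

lemma invertible_mat_if_trivial_kernel:
  fixes A :: "'a :: field mat"
  assumes A: "A \<in> carrier_mat k k"
    and kernel: "\<And>c. c \<in> carrier_vec k \<Longrightarrow> A *\<^sub>v c = 0\<^sub>v k \<Longrightarrow> c = 0\<^sub>v k"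
  shows "invertible_mat A"
proof -
  have "det A \<noteq> 0" using det_0_iff_vec_prod_zero_field[OF A] kernel by blast
  from det_non_zero_imp_unit[OF A this, of "()"]
  obtain B where "B \<in> carrier_mat k k" "A * B = 1\<^sub>m k" "B * A = 1\<^sub>m k"
    unfolding Units_def ring_mat_def by auto
  with A show ?thesis unfolding invertible_mat_def inverts_mat_def by auto
qed

lemma mat_diag_mult_vec:
  fixes u :: "'a :: comm_ring_1 vec"
  assumes u: "u \<in> carrier_vec m"
  shows "mat_diag m d *\<^sub>v u = vec m (\<lambda>i. d i * u $ i)"
proof (rule eq_vecI)
  fix i assume "i < dim_vec (vec m (\<lambda>i. d i * u $ i))"
  hence i: "i < m" by simp
  have "(mat_diag m d *\<^sub>v u) $ i = d i * u $ i"
    using i u unfolding mat_diag_def by (simp add: scalar_prod_def, subst sum.remove[of _ i], auto)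
  with i show "(mat_diag m d *\<^sub>v u) $ i = vec m (\<lambda>i. d i * u $ i) $ i" by simp
qed (simp add: mat_diag_def)

lemma quadratic_form_mat_diag:
  fixes u :: "'a :: comm_ring_1 vec"
  assumes u: "u \<in> carrier_vec m"
  shows "u \<bullet> (mat_diag m d *\<^sub>v u) = (\<Sum>i<m. d i * (u $ i)\<^sup>2)"
  using u by (simp add: mat_diag_mult_vec scalar_prod_def atLeast0LessThan power2_eq_square
      mult.left_commute)

lemma quadratic_form_congruence:
  fixes A B :: "'a :: comm_ring_1 mat"
  assumes A: "A \<in> carrier_mat m n" and B: "B \<in> carrier_mat m m" and v: "v \<in> carrier_vec n"
  shows "v \<bullet> (transpose_mat A * B * A *\<^sub>v v) = (A *\<^sub>v v) \<bullet> (B *\<^sub>v (A *\<^sub>v v))"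
proof -
  let ?w = "B *\<^sub>v (A *\<^sub>v v)"
  have "transpose_mat A * B * A *\<^sub>v v = (transpose_mat A * B) *\<^sub>v (A *\<^sub>v v)"
    using A B v by (intro assoc_mult_mat_vec) auto
  also have "\<dots> = transpose_mat A *\<^sub>v ?w"
    using A B v by (intro assoc_mult_mat_vec) auto
  finally have "v \<bullet> (transpose_mat A * B * A *\<^sub>v v) = (transpose_mat A *\<^sub>v ?w) \<bullet> v"
    using A B v by (simp add: comm_scalar_prod[OF v])
  also have "\<dots> = ?w \<bullet> (A *\<^sub>v v)"
    using A B v by (intro transpose_vec_mult_scalar) auto
  also have "\<dots> = (A *\<^sub>v v) \<bullet> ?w"
    using A B v by (intro comm_scalar_prod[of _ m]) auto
  finally show ?thesis .
qed

lemma mult_eigenvector_cols: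
  fixes G P :: "'a :: comm_ring_1 mat"
  assumes G: "G \<in> carrier_mat n n" and P: "P \<in> carrier_mat n k"
    and eig: "\<And>j. j < k \<Longrightarrow> G *\<^sub>v col P j = \<mu> j \<cdot>\<^sub>v col P j"
  shows "G * P = P * mat_diag k \<mu>"
proof (rule eq_matI)
  fix i j assume "i < dim_row (P * mat_diag k \<mu>)" "j < dim_col (P * mat_diag k \<mu>)"
  hence i: "i < n" and j: "j < k" using P mat_diag_dim[of k \<mu>] by auto
  have "(G * P) $$ (i,j) = (G *\<^sub>v col P j) $ i" using G P i j by (simp add: mult_mat_vec_def)
  with eig[OF j] show "(G * P) $$ (i,j) = (P * mat_diag k \<mu>) $$ (i,j)"
    using P i j by (simp add: mat_diag_mult_right)
qed (use G P in \<open>auto simp: mat_diag_def\<close>)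

lemma quadratic_form_orthonormal_eigenvectors:
  fixes G P :: "'a :: comm_ring_1 mat"
  assumes G: "G \<in> carrier_mat n n" and P: "P \<in> carrier_mat n k"
    and orth: "transpose_mat P * P = 1\<^sub>m k"
    and eig: "\<And>j. j < k \<Longrightarrow> G *\<^sub>v col P j = \<mu> j \<cdot>\<^sub>v col P j"
    and c: "c \<in> carrier_vec k"
  shows "(P *\<^sub>v c) \<bullet> (G *\<^sub>v (P *\<^sub>v c)) = (\<Sum>j<k. \<mu> j * (c $ j)\<^sup>2)"
proof -
  let ?D = "mat_diag k \<mu>"
  have Dc: "?D *\<^sub>v c \<in> carrier_vec k" using mat_diag_dim c by (rule mult_mat_vec_carrier)
  have "G *\<^sub>v (P *\<^sub>v c) = (P * ?D) *\<^sub>v c"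
    using mult_eigenvector_cols[OF G P eig] G P c by (metis assoc_mult_mat_vec)
  also have "\<dots> = P *\<^sub>v (?D *\<^sub>v c)" using P c by (intro assoc_mult_mat_vec) auto
  finally have "(P *\<^sub>v c) \<bullet> (G *\<^sub>v (P *\<^sub>v c)) = (transpose_mat P *\<^sub>v (P *\<^sub>v (?D *\<^sub>v c))) \<bullet> c"
    using P c Dc by (simp add: transpose_vec_mult_scalar comm_scalar_prod[of "P *\<^sub>v c" n])
  also have "transpose_mat P *\<^sub>v (P *\<^sub>v (?D *\<^sub>v c)) = ?D *\<^sub>v c"
    using P Dc orth by (simp flip: assoc_mult_mat_vec)
  also have "(?D *\<^sub>v c) \<bullet> c = (\<Sum>j<k. \<mu> j * (c $ j)\<^sup>2)"
    using c Dc by (simp add: comm_scalar_prod[OF Dc c] quadratic_form_mat_diag)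
  finally show ?thesis .
qed

lemma sum_neg_mult_power2_less_zero:
  fixes c :: "real vec"
  assumes neg: "\<And>j. j < k \<Longrightarrow> \<mu> j < 0" and c: "c \<in> carrier_vec k" and nz: "c \<noteq> 0\<^sub>v k"
  shows "(\<Sum>j<k. \<mu> j * (c $ j)\<^sup>2) < 0"
proof -
  obtain j where j: "j < k" "c $ j \<noteq> 0" using c nz by (metis eq_vecI index_zero_vec carrier_vecD)
  have "(\<Sum>j<k. \<mu> j * (c $ j)\<^sup>2) < (\<Sum>j<k. 0)"
  proof (rule sum_strict_mono_ex1)
    show "\<forall>i\<in>{..<k}. \<mu> i * (c $ i)\<^sup>2 \<le> 0"
      using neg by (simp add: mult_nonpos_nonneg less_imp_le)
    show "\<exists>i\<in>{..<k}. \<mu> i * (c $ i)\<^sup>2 < 0"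
      using j neg[OF j(1)] by (auto intro!: bexI[of _ j] mult_neg_pos)
  qed simp
  thus ?thesis by simp
qed

lemma Ymat_carrier: "Ymat n y \<in> carrier_mat (n + 1) n"
  by (simp add: Ymat_def)

lemma Yminus_carrier: "Yminus n y l \<in> carrier_mat (nneg n l) n"
  by (simp add: Yminus_def)

lemma Gmat_eq: "Gmat n y l = transpose_mat (Ymat n y) * mat_diag (n+1) (\<lambda>i. l (i+1)) * Ymat n y"
  unfolding Gmat_def mat_diag_def
  by (rule arg_cong2[where f = "(*)"], rule arg_cong2[where f = "(*)"]) (auto intro!: cong_mat)

lemma Gmat_carrier: "Gmat n y l \<in> carrier_mat n n"
  unfolding Gmat_eq using Ymat_carrier[of n y] by (intro mult_carrier_mat) auto

lemma nneg_le: "nneg n l \<le> n + 1"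
  unfolding nneg_def by (rule order.trans[OF card_mono[of "{1..n+1}"]]) auto

lemma negative_coord_index_ge:
  assumes sorted: "\<forall>i j. 1 \<le> i \<and> i \<le> j \<and> j \<le> n+1 \<longrightarrow> l j \<le> l i"
    and i: "1 \<le> i" "i \<le> n + 1" "l i < 0"
  shows "n + 2 - nneg n l \<le> i"
proof -
  have "{i..n+1} \<subseteq> {i\<in>{1..n+1}. l i < 0}" using i sorted by fastforce
  hence "card {i..n+1} \<le> nneg n l" unfolding nneg_def by (intro card_mono) auto
  thus ?thesis by simp
qed

lemma row_Yminus:
  assumes "t < nneg n l"
  shows "row (Yminus n y l) t = row (Ymat n y) (n + 1 - nneg n l + t)"
  using assms nneg_le[of n l] by (intro eq_vecI) (auto simp: Yminus_def Ymat_def)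

lemma Ymat_mult_vec_negative_row:
  assumes sorted: "\<forall>i j. 1 \<le> i \<and> i \<le> j \<and> j \<le> n+1 \<longrightarrow> l j \<le> l i"
    and kernel: "Yminus n y l *\<^sub>v v = 0\<^sub>v (nneg n l)"
    and i: "i < n + 1" "l (i + 1) < 0"
  shows "(Ymat n y *\<^sub>v v) $ i = 0"
proof -
  define t where "t = i - (n + 1 - nneg n l)"
  have t: "t < nneg n l" "i = n + 1 - nneg n l + t"
    using negative_coord_index_ge[OF sorted, of "i + 1"] i nneg_le[of n l] unfolding t_def by auto
  have "(Ymat n y *\<^sub>v v) $ i = row (Ymat n y) i \<bullet> v"
    using i by (intro index_mult_mat_vec) (simp add: Ymat_def)
  also have "\<dots> = row (Yminus n y l) t \<bullet> v" using row_Yminus[OF t(1)] t(2) by simp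
  also have "\<dots> = (Yminus n y l *\<^sub>v v) $ t"
    using t(1) by (intro index_mult_mat_vec[symmetric]) (simp add: Yminus_def)
  also have "\<dots> = 0" using kernel t(1) by simp
  finally show ?thesis .
qed

lemma quadratic_form_Gmat_nonneg:
  assumes sorted: "\<forall>i j. 1 \<le> i \<and> i \<le> j \<and> j \<le> n+1 \<longrightarrow> l j \<le> l i"
    and v: "v \<in> carrier_vec n" and kernel: "Yminus n y l *\<^sub>v v = 0\<^sub>v (nneg n l)"
  shows "0 \<le> v \<bullet> (Gmat n y l *\<^sub>v v)"
proof -
  let ?u = "Ymat n y *\<^sub>v v"
  have "v \<bullet> (Gmat n y l *\<^sub>v v) = ?u \<bullet> (mat_diag (n+1) (\<lambda>i. l (i+1)) *\<^sub>v ?u)"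
    unfolding Gmat_eq by (rule quadratic_form_congruence[OF Ymat_carrier mat_diag_dim v])
  also have "\<dots> = (\<Sum>i<n+1. l (i+1) * (?u $ i)\<^sup>2)"
    using Ymat_carrier[of n y] v by (intro quadratic_form_mat_diag) auto
  also have "\<dots> \<ge> 0"
    using Ymat_mult_vec_negative_row[OF sorted kernel] by (intro sum_nonneg) (force simp: not_less)
  finally show ?thesis .
qed

theorem lemma4p2:
  fixes n :: nat and y :: "nat \<Rightarrow> real vec" and l :: "nat \<Rightarrow> real" and P :: "real mat"
  assumes dim: "\<forall>i\<in>{0..n+1}. y i \<in> carrier_vec n"
    and indep: "aff_indep n y"
    and bary_sum: "(\<Sum>i=1..n+1. l i) = 1"
    and bary_pt: "finsum_vec TYPE(real) n (\<lambda>i. l i \<cdot>\<^sub>v y i) {1..n+1} = y 0"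
    and sorted: "\<forall>i j. 1 \<le> i \<and> i \<le> j \<and> j \<le> n+1 \<longrightarrow> l j \<le> l i"
    and P_dim: "P \<in> carrier_mat n (nneg n l)"
    and P_orth: "transpose_mat P * P = 1\<^sub>m (nneg n l)"
    and P_eig: "\<forall>j<nneg n l. \<exists>\<mu>::real. \<mu> < 0 \<and> Gmat n y l *\<^sub>v col P j = \<mu> \<cdot>\<^sub>v col P j"
  shows "invertible_mat (Yminus n y l * P)"
  \<comment> \<open>Only the ordering of the coordinates and the properties of P are needed.\<close>
proof -
  let ?k = "nneg n l" and ?G = "Gmat n y l"
  from P_eig obtain \<mu> where \<mu>: "\<And>j. j < ?k \<Longrightarrow> \<mu> j < 0 \<and> ?G *\<^sub>v col P j = \<mu> j \<cdot>\<^sub>v col P j"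
    by metis
  show ?thesis
  proof (rule invertible_mat_if_trivial_kernel)
    show "Yminus n y l * P \<in> carrier_mat ?k ?k" using Yminus_carrier P_dim by (rule mult_carrier_mat)
  next
    fix c assume c: "c \<in> carrier_vec ?k" and "Yminus n y l * P *\<^sub>v c = 0\<^sub>v ?k"
    hence "Yminus n y l *\<^sub>v (P *\<^sub>v c) = 0\<^sub>v ?k"
      by (simp add: assoc_mult_mat_vec[OF Yminus_carrier P_dim c])
    with sorted P_dim c have "0 \<le> (P *\<^sub>v c) \<bullet> (?G *\<^sub>v (P *\<^sub>v c))"
      by (intro quadratic_form_Gmat_nonneg) auto
    also have "\<dots> = (\<Sum>j<?k. \<mu> j * (c $ j)\<^sup>2)"
      using Gmat_carrier P_dim P_orth c \<mu> by (intro quadratic_form_orthonormal_eigenvectors) auto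
    finally show "c = 0\<^sub>v ?k"
      using sum_neg_mult_power2_less_zero[of ?k \<mu> c] \<mu> c by fastforce
  qed
qed

end
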